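(* Let $c,h,\alpha,\beta\in\mathbb{C}$, $l,\gamma\in\mathbb{C}^*$, and let $M$ be a nonzero $\mathcal{D}$-submodule of $L(c,h,l)\otimes A(\alpha,\beta,\gamma)$. Then (a) there exists $k\in\frac12\mathbb{Z}$ with $\bar{\mathbf{1}}\otimes v_k\in M$; and (b) there exists $k\in\frac12\mathbb{Z}$ such that $\bar{\mathbf{1}}\otimes v_i\in M$ for all $i\in\frac12\mathbb{Z}$ with $i\geq k$.
   Context: The mirror-twisted Heisenberg–Virasoro algebra $\mathcal{D}$ is the complex Lie algebra with basis $\{d_m,h_r,\mathbf{c},\mathbf{l}: m\in\mathbb{Z}, r\in\frac12+\mathbb{Z}\}$ and brackets $[d_m,d_n]=(m-n)d_{m+n}+\frac{m^3-m}{12}\delta_{m+n,0}\mathbf{c}$, $[d_m,h_r]=-rh_{m+r}$, $[h_r,h_s]=r\delta_{r+s,0}\mathbf{l}$, with $\mathbf{c},\mathbf{l}$ central. $\mathcal{D}^{+}=\mathrm{span}\{d_{n},h_{r}: n\in\mathbb{N}, r\in\frac12+\mathbb{Z}_{\ge0}\}$, $\mathcal{D}^0=\mathrm{span}\{d_0,\mathbf{c},\mathbf{l}\}$. $L(c,h,l)$ is the irreducible quotient of the Verma module $M(c,h,l)=U(\mathcal{D})\otimes_{U(\mathcal{D}^0\oplus\mathcal{D}^+)}\mathbb{C}\mathbf{1}$ ($d_0\mathbf{1}=h\mathbf{1}$, $\mathbf{c}\mathbf{1}=c\mathbf{1}$, $\mathbf{l}\mathbf{1}=l\mathbf{1}$,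 $\mathcal{D}^+\mathbf{1}=0$) by its unique maximal proper submodule, and $\bar{\mathbf{1}}$ is the image of $\mathbf{1}$. $A(\alpha,\beta,\gamma)$ is the $\mathcal{D}$-module with basis $\{v_k:k\in\frac12\mathbb{Z}\}$ and $d_mv_k=(\alpha+\beta m-k)v_{m+k}$, $h_rv_n=v_{n+r}$ for $n\in\mathbb{Z}$, $h_rv_s=\gamma v_{r+s}$ for $s\in\frac12+\mathbb{Z}$, $\mathbf{c},\mathbf{l}$ acting as $0$. Tensor products carry the action $x(v\otimes w)=xv\otimes w+v\otimes xw$. *)

theory Defs
  imports Complex_Main
begin

text \<open>Indices in 1/2 Z are encoded by integers: the integer n stands for n/2.
  The element h_r (r in 1/2 + Z) is encoded by the integer j with r = j + 1/2.
  A complex vector space is a type 'v with an explicit scalar multiplication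
  sc satisfying the locale vector_space.\<close>

text \<open>A D-module structure on V (given by the actions dd m of d_m and hh j of h_(j+1/2)),
  in which the central elements c and l act as the scalars cc and ll.\<close>
definition D_module ::
  "(complex \<Rightarrow> 'v::ab_group_add \<Rightarrow> 'v) \<Rightarrow> complex \<Rightarrow> complex \<Rightarrow>
   (int \<Rightarrow> 'v \<Rightarrow> 'v) \<Rightarrow> (int \<Rightarrow> 'v \<Rightarrow> 'v) \<Rightarrow> bool" where
  "D_module sc cc ll dd hh \<longleftrightarrow>
     vector_space sc \<and>
     (\<forall>m. Vector_Spaces.linear sc sc (dd m)) \<and>
     (\<forall>j. Vector_Spaces.linear sc sc (hh j)) \<and>
     (\<forall>m n v. dd m (dd n v) - dd n (dd m v) =
        sc (of_int (m - n)) (dd (m + n) v)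
        + sc (if m + n = 0 then (of_int (m^3 - m) / 12) * cc else 0) v) \<and>
     (\<forall>m j v. dd m (hh j v) - hh j (dd m v) =
        sc (- (of_int j + 1/2)) (hh (m + j) v)) \<and>
     (\<forall>i j v. hh i (hh j v) - hh j (hh i v) =
        sc (if i + j + 1 = 0 then (of_int i + 1/2) * ll else 0) v)"

text \<open>(V, w) is the irreducible highest weight module L(c,h,l) with highest weight
  vector w (the image of 1): an irreducible D-module generated by a nonzero vector w
  with d_0 w = h w, c w = c w, l w = l w, D^+ w = 0.  Such a module is unique up to
  isomorphism and equals L(c,h,l).\<close>
definition is_L_module ::
  "(complex \<Rightarrow> 'v::ab_group_add \<Rightarrow> 'v) \<Rightarrow> complex \<Rightarrow> complex \<Rightarrow> complex \<Rightarrow>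
   (int \<Rightarrow> 'v \<Rightarrow> 'v) \<Rightarrow> (int \<Rightarrow> 'v \<Rightarrow> 'v) \<Rightarrow> 'v \<Rightarrow> bool" where
  "is_L_module sc cc hw ll dd hh w \<longleftrightarrow>
     D_module sc cc ll dd hh \<and>
     w \<noteq> 0 \<and>
     dd 0 w = sc hw w \<and>
     (\<forall>n>0. dd n w = 0) \<and>
     (\<forall>j\<ge>0. hh j w = 0) \<and>
     (\<forall>W. module.subspace sc W \<and> (\<forall>m. dd m ` W \<subseteq> W) \<and> (\<forall>j. hh j ` W \<subseteq> W)
          \<and> (\<exists>u\<in>W. u \<noteq> 0) \<longrightarrow> W = UNIV)"

text \<open>The tensor product L \<otimes> A(\<alpha>,\<beta>,\<gamma>): since A has basis v_k (k in 1/2 Z), an element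
  \<Sum>_k u_k \<otimes> v_k is represented by the finitely supported function n \<mapsto> u_(n/2).\<close>
definition tensor_space :: "(int \<Rightarrow> 'v::zero) set" where
  "tensor_space = {f. finite {n. f n \<noteq> 0}}"

text \<open>Action of d_m on the tensor product:
  d_m (u \<otimes> v_k) = d_m u \<otimes> v_k + (\<alpha> + \<beta> m - k) u \<otimes> v_(m+k).\<close>
definition tensor_d ::
  "(complex \<Rightarrow> 'v \<Rightarrow> 'v) \<Rightarrow> (int \<Rightarrow> 'v \<Rightarrow> 'v::ab_group_add) \<Rightarrow> complex \<Rightarrow> complex \<Rightarrow>
   int \<Rightarrow> (int \<Rightarrow> 'v) \<Rightarrow> int \<Rightarrow> 'v" where
  "tensor_d sc dd \<alpha> \<beta> m f n =
     dd m (f n) + sc (\<alpha> + \<beta> * of_int m - of_int (n - 2*m) / 2) (f (n - 2*m))"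

text \<open>Action of h_r, r = j + 1/2, on the tensor product:
  h_r (u \<otimes> v_s) = h_r u \<otimes> v_s + u \<otimes> h_r v_s, with h_r v_s = v_(s+r) for s in Z
  and h_r v_s = \<gamma> v_(s+r) for s in 1/2 + Z.\<close>
definition tensor_h ::
  "(complex \<Rightarrow> 'v \<Rightarrow> 'v) \<Rightarrow> (int \<Rightarrow> 'v \<Rightarrow> 'v::ab_group_add) \<Rightarrow> complex \<Rightarrow>
   int \<Rightarrow> (int \<Rightarrow> 'v) \<Rightarrow> int \<Rightarrow> 'v" where
  "tensor_h sc hh \<gamma> j f n =
     hh j (f n) + sc (if even (n - (2*j+1)) then 1 else \<gamma>) (f (n - (2*j+1)))"

text \<open>D-submodules of L \<otimes> A (the central elements act by scalars, so closure under
  them is automatic for subspaces).\<close>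
definition tensor_submodule ::
  "(complex \<Rightarrow> 'v \<Rightarrow> 'v) \<Rightarrow> (int \<Rightarrow> 'v \<Rightarrow> 'v::ab_group_add) \<Rightarrow> (int \<Rightarrow> 'v \<Rightarrow> 'v) \<Rightarrow>
   complex \<Rightarrow> complex \<Rightarrow> complex \<Rightarrow> (int \<Rightarrow> 'v) set \<Rightarrow> bool" where
  "tensor_submodule sc dd hh \<alpha> \<beta> \<gamma> M \<longleftrightarrow>
     M \<subseteq> tensor_space \<and>
     (\<lambda>_. 0) \<in> M \<and>
     (\<forall>f\<in>M. \<forall>g\<in>M. (\<lambda>n. f n + g n) \<in> M) \<and>
     (\<forall>a. \<forall>f\<in>M. (\<lambda>n. sc a (f n)) \<in> M) \<and>
     (\<forall>m. \<forall>f\<in>M. tensor_d sc dd \<alpha> \<beta> m f \<in> M) \<and>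
     (\<forall>j. \<forall>f\<in>M. tensor_h sc hh \<gamma> j f \<in> M)"

definition pure_tensor :: "'v::zero \<Rightarrow> int \<Rightarrow> int \<Rightarrow> 'v" where
  "pure_tensor u k = (\<lambda>n. if n = k then u else 0)"

end

theory Submission
  imports Defs
begin

(*
  Every vector of the irreducible module L is killed by d_m and h_m for all large m, because
  the vectors with this property form a nonzero submodule. So for a fixed element f of L \<otimes> A
  and large indices, d_m and h_r act on the A-factor alone, as shifts with explicit coefficients.
  Two such h-steps shift f by an even amount up to the factor \<gamma>, while d_m shifts it with a
  coefficient affine in the index; a suitable difference kills one term of f. Induction on the
  number of terms gives u \<otimes> v_k \<in> M with u \<noteq> 0, and further h-steps give u \<otimes> v_i \<in> M for all
  large i. The vectors u with this last property form a nonzero submodule of L, so they include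
  the highest weight vector.
*)

locale L_module =
  fixes sc :: "complex \<Rightarrow> 'v::ab_group_add \<Rightarrow> 'v"
    and cc hw ll :: complex
    and dd hh :: "int \<Rightarrow> 'v \<Rightarrow> 'v"
    and w :: 'v
  assumes L_module: "is_L_module sc cc hw ll dd hh w"
begin

sublocale vs: vector_space sc
  using L_module by (simp add: is_L_module_def D_module_def)

lemma dd_hom: "module_hom sc sc (dd m)"
  and hh_hom: "module_hom sc sc (hh m)"
  using L_module by (simp_all add: is_L_module_def D_module_def module_hom_iff_linear)

lemma dd_zero [simp]: "dd m 0 = 0"
  and dd_add: "dd m (x + y) = dd m x + dd m y"
  and dd_scale: "dd m (sc a x) = sc a (dd m x)"
  using dd_hom[of m] by (simp_all add: module_hom.zero module_hom.add module_hom.scale)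

lemma hh_zero [simp]: "hh m 0 = 0"
  and hh_add: "hh m (x + y) = hh m x + hh m y"
  and hh_scale: "hh m (sc a x) = sc a (hh m x)"
  using hh_hom[of m] by (simp_all add: module_hom.zero module_hom.add module_hom.scale)

lemma dd_dd_commutator:
  "dd m (dd n v) - dd n (dd m v) =
     sc (of_int (m - n)) (dd (m + n) v)
     + sc (if m + n = 0 then (of_int (m^3 - m) / 12) * cc else 0) v"
  and dd_hh_commutator:
  "dd m (hh j v) - hh j (dd m v) = sc (- (of_int j + 1/2)) (hh (m + j) v)"
  and hh_hh_commutator:
  "hh i (hh j v) - hh j (hh i v) = sc (if i + j + 1 = 0 then (of_int i + 1/2) * ll else 0) v"
  using L_module by (simp_all add: is_L_module_def D_module_def)

lemma irreducible:
  assumes "vs.subspace W" "\<And>m. dd m ` W \<subseteq> W" "\<And>j. hh j ` W \<subseteq> W" "u \<in> W" "u \<noteq> 0"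
  shows "W = UNIV"
  using L_module assms unfolding is_L_module_def by blast

definition annihilated_beyond :: "int \<Rightarrow> 'v \<Rightarrow> bool" where
  "annihilated_beyond N u \<longleftrightarrow> (\<forall>m\<ge>N. dd m u = 0 \<and> hh m u = 0)"

lemma annihilated_beyond_mono:
  "annihilated_beyond N u \<Longrightarrow> N \<le> N' \<Longrightarrow> annihilated_beyond N' u"
  by (simp add: annihilated_beyond_def)

lemma annihilated_beyond_zero [simp]: "annihilated_beyond N 0"
  by (simp add: annihilated_beyond_def)

lemma annihilated_beyond_add:
  "annihilated_beyond N x \<Longrightarrow> annihilated_beyond N y \<Longrightarrow> annihilated_beyond N (x + y)"
  by (simp add: annihilated_beyond_def dd_add hh_add)

lemma annihilated_beyond_scale: "annihilated_beyond N x \<Longrightarrow> annihilated_beyond N (sc a x)"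
  by (simp add: annihilated_beyond_def dd_scale hh_scale)

lemma annihilated_beyond_dd:
  assumes "annihilated_beyond N u"
  shows "annihilated_beyond (max N (max (N - k) (1 - k))) (dd k u)"
  unfolding annihilated_beyond_def
proof (intro allI impI conjI)
  fix m assume "max N (max (N - k) (1 - k)) \<le> m"
  then show "dd m (dd k u) = 0" "hh m (dd k u) = 0"
    using assms dd_dd_commutator[of m k u] dd_hh_commutator[of k m u]
    by (auto simp: annihilated_beyond_def add.commute)
qed

lemma annihilated_beyond_hh:
  assumes "annihilated_beyond N u"
  shows "annihilated_beyond (max N (max (N - k) (- k))) (hh k u)"
  unfolding annihilated_beyond_def
proof (intro allI impI conjI)
  fix m assume "max N (max (N - k) (- k)) \<le> m"
  then show "dd m (hh k u) = 0" "hh m (hh k u) = 0"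
    using assms dd_hh_commutator[of m k u] hh_hh_commutator[of m k u]
    by (auto simp: annihilated_beyond_def)
qed

lemma eventually_annihilated: "\<exists>N. annihilated_beyond N u"
proof -
  let ?W = "{u. \<exists>N. annihilated_beyond N u}"
  have "vs.subspace ?W"
  proof (rule vs.subspaceI)
    fix x y assume "x \<in> ?W" "y \<in> ?W"
    then obtain N1 N2 where "annihilated_beyond N1 x" "annihilated_beyond N2 y" by blast
    then have "annihilated_beyond (max N1 N2) (x + y)"
      by (intro annihilated_beyond_add) (auto elim: annihilated_beyond_mono)
    then show "x + y \<in> ?W" by blast
  qed (auto intro: annihilated_beyond_scale)
  moreover have "dd k ` ?W \<subseteq> ?W" "hh k ` ?W \<subseteq> ?W" for k
    using annihilated_beyond_dd annihilated_beyond_hh by blast+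
  moreover have "annihilated_beyond 1 w"
    using L_module by (simp add: is_L_module_def annihilated_beyond_def)
  ultimately show ?thesis
    using irreducible[of ?W w] L_module by (auto simp: is_L_module_def)
qed

lemma tensor_uniformly_annihilated:
  assumes "f \<in> tensor_space"
  shows "\<exists>N\<ge>0. \<forall>n. annihilated_beyond N (f n)"
proof -
  have "\<forall>\<^sub>F N in at_top. annihilated_beyond N (f n)" for n
    using eventually_annihilated[of "f n"] annihilated_beyond_mono
    by (auto simp: eventually_at_top_linorder)
  then have "\<forall>\<^sub>F N in at_top. N \<ge> 0 \<and> (\<forall>n\<in>{n. f n \<noteq> 0}. annihilated_beyond N (f n))"
    using assms by (intro eventually_conj eventually_ball_finite) (auto simp: tensor_space_def)
  then obtain N where "N \<ge> 0" "\<forall>n\<in>{n. f n \<noteq> 0}. annihilated_beyond N (f n)"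
    by (auto simp: eventually_at_top_linorder)
  then show ?thesis
    by (metis (mono_tags) annihilated_beyond_zero mem_Collect_eq)
qed

lemma pure_tensor_dd:
  "pure_tensor (dd m x) i =
     (\<lambda>n. tensor_d sc dd \<alpha> \<beta> m (pure_tensor x i) n
          + sc (- (\<alpha> + \<beta> * of_int m - of_int i / 2)) (pure_tensor x (i + 2*m) n))"
  by (auto simp: pure_tensor_def fun_eq_iff tensor_d_def vs.scale_left_distrib[symmetric])

lemma pure_tensor_hh:
  "pure_tensor (hh j x) i =
     (\<lambda>n. tensor_h sc hh \<gamma> j (pure_tensor x i) n
          + sc (- (if even i then 1 else \<gamma>)) (pure_tensor x (i + (2*j + 1)) n))"
  by (auto simp: pure_tensor_def fun_eq_iff tensor_h_def vs.scale_left_distrib[symmetric])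
    presburger+

end

locale L_tensor_submodule = L_module +
  fixes \<alpha> \<beta> \<gamma> :: complex
    and M
  assumes tensor_submodule: "tensor_submodule sc dd hh \<alpha> \<beta> \<gamma> M"
    and \<gamma>_nonzero: "\<gamma> \<noteq> 0"
begin

lemma M_tensor_space: "f \<in> M \<Longrightarrow> f \<in> tensor_space"
  and M_zero: "(\<lambda>_. 0) \<in> M"
  and M_add: "f \<in> M \<Longrightarrow> g \<in> M \<Longrightarrow> (\<lambda>n. f n + g n) \<in> M"
  and M_scale: "f \<in> M \<Longrightarrow> (\<lambda>n. sc a (f n)) \<in> M"
  and M_tensor_d: "f \<in> M \<Longrightarrow> tensor_d sc dd \<alpha> \<beta> m f \<in> M"
  and M_tensor_h: "f \<in> M \<Longrightarrow> tensor_h sc hh \<gamma> j f \<in> M"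
  using tensor_submodule by (auto simp: tensor_submodule_def)

lemma M_unscale: "(\<lambda>n. sc a (f n)) \<in> M \<Longrightarrow> a \<noteq> 0 \<Longrightarrow> f \<in> M"
  using M_scale[of "\<lambda>n. sc a (f n)" "inverse a"] by simp

text \<open>Both steps have odd length, so exactly one of them starts in \<open>1/2 + \<int>\<close>:
  the coefficients multiply to \<open>\<gamma>\<close>.\<close>
lemma M_shift:
  assumes "f \<in> M" "\<forall>n. annihilated_beyond N (f n)" "j \<ge> N" "j' \<ge> N"
  shows "(\<lambda>n. f (n - 2*(j + j' + 1))) \<in> M"
proof -
  have "tensor_h sc hh \<gamma> j' (tensor_h sc hh \<gamma> j f) = (\<lambda>n. sc \<gamma> (f (n - 2*(j + j' + 1))))"
    using assms(2-4)
    by (auto simp: fun_eq_iff tensor_h_def annihilated_beyond_def hh_scale vs.scale_scale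
        algebra_simps)
  moreover have "tensor_h sc hh \<gamma> j' (tensor_h sc hh \<gamma> j f) \<in> M"
    using assms(1) by (intro M_tensor_h)
  ultimately show ?thesis
    using M_unscale \<gamma>_nonzero by metis
qed

lemma pure_tensor_step:
  assumes "pure_tensor u i \<in> M" "annihilated_beyond N u" "j \<ge> N"
  shows "pure_tensor u (i + 2*j + 1) \<in> M"
proof -
  have "tensor_h sc hh \<gamma> j (pure_tensor u i) =
      (\<lambda>n. sc (if even i then 1 else \<gamma>) (pure_tensor u (i + 2*j + 1) n))"
    using assms(2,3) by (auto simp: fun_eq_iff tensor_h_def pure_tensor_def annihilated_beyond_def)
  moreover have "tensor_h sc hh \<gamma> j (pure_tensor u i) \<in> M"
    using assms(1) by (rule M_tensor_h)
  ultimately show ?thesis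
    using M_unscale \<gamma>_nonzero by (metis one_neq_zero)
qed

lemma pure_tensor_eventually_in_M:
  assumes "pure_tensor u k \<in> M"
  shows "\<exists>K. \<forall>i\<ge>K. pure_tensor u i \<in> M"
proof -
  obtain N where "N \<ge> 0" and "\<forall>n. annihilated_beyond N (pure_tensor u k n)"
    using tensor_uniformly_annihilated M_tensor_space assms by blast
  then have N: "annihilated_beyond N u"
    by (metis pure_tensor_def)
  have "pure_tensor u i \<in> M" if i: "i \<ge> k + 4*N + 2" for i
  proof (cases "odd (i - k)")
    case True
    define j where "j = (i - k - 1) div 2"
    have "i = k + 2*j + 1" "j \<ge> N"
      using True i \<open>N \<ge> 0\<close> unfolding j_def by presburger+
    then show ?thesis
      using pure_tensor_step[OF assms N] by blast
  next
    case False
    define j where "j = (i - k) div 2 - N - 1"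
    have "i = (k + 2*N + 1) + 2*j + 1" "j \<ge> N"
      using False i \<open>N \<ge> 0\<close> unfolding j_def by presburger+
    then show ?thesis
      using pure_tensor_step[OF pure_tensor_step[OF assms N order_refl] N] by blast
  qed
  then show ?thesis by blast
qed

text \<open>For large \<open>m\<close>, \<open>d\<^sub>m\<close> shifts \<open>f\<close> with coefficients affine in the index; subtracting
  the pure shift scaled by the coefficient at \<open>k\<close> removes the \<open>k\<close>-th term.\<close>
lemma M_remove_support_point:
  assumes "f \<in> M" "f k \<noteq> 0"
  shows "\<exists>g\<in>M. \<exists>s. {n. g n \<noteq> 0} = (\<lambda>n. n + s) ` ({n. f n \<noteq> 0} - {k})"
proof -
  obtain N where "N \<ge> 0" and N: "\<forall>n. annihilated_beyond N (f n)"
    using tensor_uniformly_annihilated M_tensor_space assms(1) by blast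
  define m where "m = 2*N + 1"
  define g where "g = (\<lambda>n. tensor_d sc dd \<alpha> \<beta> m f n
      + sc (- (\<alpha> + \<beta> * of_int m - of_int k / 2)) (f (n - 2*m)))"
  have "(\<lambda>n. f (n - 2*m)) \<in> M"
    using M_shift[OF assms(1) N order_refl order_refl] by (simp add: m_def)
  then have "g \<in> M"
    unfolding g_def using assms(1) by (intro M_add M_tensor_d M_scale)
  have "dd m (f n) = 0" for n
    using N \<open>N \<ge> 0\<close> by (simp add: annihilated_beyond_def m_def)
  then have g_eq: "g n = sc (of_int (k - (n - 2*m)) / 2) (f (n - 2*m))" for n
    by (simp add: g_def tensor_d_def diff_divide_distrib flip: vs.scale_left_distrib)
  have "g n \<noteq> 0 \<longleftrightarrow> n - 2*m \<in> {n. f n \<noteq> 0} - {k}" for n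
    unfolding g_eq by (auto simp del: of_int_diff of_int_mult)
  then have "{n. g n \<noteq> 0} = {n. n - 2*m \<in> {n. f n \<noteq> 0} - {k}}"
    by blast
  also have "\<dots> = (\<lambda>n. n + 2*m) ` ({n. f n \<noteq> 0} - {k})"
    by (auto intro!: image_eqI[where x = "_ - 2*m"])
  finally show ?thesis
    using \<open>g \<in> M\<close> by blast
qed

lemma exists_pure_tensor_in_M:
  assumes "f \<in> M" "f \<noteq> (\<lambda>_. 0)"
  shows "\<exists>u k. u \<noteq> 0 \<and> pure_tensor u k \<in> M"
  using assms
proof (induction "card {n. f n \<noteq> 0}" arbitrary: f rule: less_induct)
  case less
  let ?S = "{n. f n \<noteq> 0}"
  have "finite ?S"
    using less.prems M_tensor_space by (simp add: tensor_space_def)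
  obtain k where k: "f k \<noteq> 0"
    using less.prems by auto
  show ?case
  proof (cases "?S = {k}")
    case True
    then have "f = pure_tensor (f k) k"
      by (auto simp: pure_tensor_def fun_eq_iff)
    then show ?thesis
      using k less.prems(1) by metis
  next
    case False
    then obtain k' where k': "k' \<in> ?S - {k}"
      using k by auto
    obtain g s where "g \<in> M" and supp: "{n. g n \<noteq> 0} = (\<lambda>n. n + s) ` (?S - {k})"
      using M_remove_support_point[OF less.prems(1) k] by blast
    have "card {n. g n \<noteq> 0} < card ?S"
      unfolding supp using card_Diff1_less[OF \<open>finite ?S\<close>, of k] k
      by (simp add: card_image inj_on_def)
    moreover have "g \<noteq> (\<lambda>_. 0)"
      using supp k' by (metis (mono_tags) image_eqI mem_Collect_eq)
    ultimately show ?thesis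
      using less.hyps \<open>g \<in> M\<close> by blast
  qed
qed

definition tail_vectors where
  "tail_vectors = {u. \<exists>K. \<forall>i\<ge>K. pure_tensor u i \<in> M}"

lemma tail_vectors_subspace: "vs.subspace tail_vectors"
proof (rule vs.subspaceI)
  show "0 \<in> tail_vectors"
    using M_zero by (simp add: tail_vectors_def pure_tensor_def)
next
  fix x y assume "x \<in> tail_vectors" "y \<in> tail_vectors"
  then obtain K1 K2 where "\<forall>i\<ge>K1. pure_tensor x i \<in> M" "\<forall>i\<ge>K2. pure_tensor y i \<in> M"
    by (auto simp: tail_vectors_def)
  moreover have "pure_tensor (x + y) i = (\<lambda>n. pure_tensor x i n + pure_tensor y i n)" for i
    by (simp add: pure_tensor_def fun_eq_iff)
  ultimately have "\<forall>i\<ge>max K1 K2. pure_tensor (x + y) i \<in> M"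
    using M_add by simp
  then show "x + y \<in> tail_vectors"
    unfolding tail_vectors_def by blast
next
  fix a x assume "x \<in> tail_vectors"
  then obtain K where "\<forall>i\<ge>K. pure_tensor x i \<in> M"
    by (auto simp: tail_vectors_def)
  moreover have "pure_tensor (sc a x) i = (\<lambda>n. sc a (pure_tensor x i n))" for i
    by (simp add: pure_tensor_def fun_eq_iff)
  ultimately have "\<forall>i\<ge>K. pure_tensor (sc a x) i \<in> M"
    using M_scale by simp
  then show "sc a x \<in> tail_vectors"
    unfolding tail_vectors_def by blast
qed

lemma tail_vectors_dd: "dd m ` tail_vectors \<subseteq> tail_vectors"
proof clarify
  fix x assume "x \<in> tail_vectors"
  then obtain K where K: "\<forall>i\<ge>K. pure_tensor x i \<in> M"
    by (auto simp: tail_vectors_def)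
  have "pure_tensor (dd m x) i \<in> M" if "i \<ge> max K (K - 2*m)" for i
    unfolding pure_tensor_dd[where \<alpha> = \<alpha> and \<beta> = \<beta>] using K that
    by (intro M_add M_tensor_d M_scale) auto
  then show "dd m x \<in> tail_vectors"
    unfolding tail_vectors_def by blast
qed

lemma tail_vectors_hh: "hh j ` tail_vectors \<subseteq> tail_vectors"
proof clarify
  fix x assume "x \<in> tail_vectors"
  then obtain K where K: "\<forall>i\<ge>K. pure_tensor x i \<in> M"
    by (auto simp: tail_vectors_def)
  have "pure_tensor (hh j x) i \<in> M" if "i \<ge> max K (K - (2*j + 1))" for i
    unfolding pure_tensor_hh[where \<gamma> = \<gamma>] using K that
    by (intro M_add M_tensor_h M_scale) auto
  then show "hh j x \<in> tail_vectors"
    unfolding tail_vectors_def by blast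
qed

lemma tail_vectors_eq_UNIV:
  assumes "\<exists>f\<in>M. f \<noteq> (\<lambda>_. 0)"
  shows "tail_vectors = UNIV"
proof -
  obtain u k where "u \<noteq> 0" "pure_tensor u k \<in> M"
    using exists_pure_tensor_in_M assms by blast
  then have "u \<in> tail_vectors"
    using pure_tensor_eventually_in_M by (simp add: tail_vectors_def)
  with \<open>u \<noteq> 0\<close> show ?thesis
    by (intro irreducible[OF tail_vectors_subspace tail_vectors_dd tail_vectors_hh])
qed

end

theorem lemma3p5:
  fixes sc :: "complex \<Rightarrow> 'v::ab_group_add \<Rightarrow> 'v"
    and dd hh :: "int \<Rightarrow> 'v \<Rightarrow> 'v"
    and w :: 'v
    and c h l \<alpha> \<beta> \<gamma> :: complex
    and M :: "(int \<Rightarrow> 'v) set"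
  assumes "l \<noteq> 0" and "\<gamma> \<noteq> 0"
    and "is_L_module sc c h l dd hh w"
    and "tensor_submodule sc dd hh \<alpha> \<beta> \<gamma> M"
    and "\<exists>f\<in>M. f \<noteq> (\<lambda>_. 0)"
  shows "(\<exists>k::int. pure_tensor w k \<in> M) \<and>
         (\<exists>k::int. \<forall>i\<ge>k. pure_tensor w i \<in> M)"
proof -
  interpret L_tensor_submodule sc c h l dd hh w \<alpha> \<beta> \<gamma> M
    using assms(2-4) by unfold_locales
  have "w \<in> tail_vectors"
    using tail_vectors_eq_UNIV[OF assms(5)] by simp
  then show ?thesis
    unfolding tail_vectors_def by blast
qed

end
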